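(* Let $G=(V,E)$ be a connected chordal graph on at least three vertices and let $E'$ be a minimum-size $(3,1)$-completion set of $G$. Let $T_i$ and $T_j$ be two distinct trees of $G$ with $|V(T_i)|\ge3$, $|V(T_j)|\ge3$ and $|E'_{i,j}|>0$. Then there is a minimum-size $(3,1)$-completion set $E''$ of $G$ with $|E''_{i,j}|=0$ obtained from $E'$ by replacing the edges of $E'_{i,j}$ with non-edges of $G$ having both endpoints in $V(T_i)$ or both endpoints in $V(T_j)$.
   Context: A graph is chordal if it has no induced cycle of length at least four. A bridge of $G$ is an edge whose removal disconnects $G$. The trees of $G$, denoted $T_1,\dots,T_c$, are the maximal connected subgraphs formed by bridges of $G$ (the non-trivial connected components of the subgraph $(V,\{\text{bridges of }G\})$). A connected graph has a $(3,1)$-cover if each edge lies in a triangle; a set $E'$ of non-edges of $G$ is a $(3,1)$-completion set if $G\cup E'$ has a $(3,1)$-cover. For a completion set $E'$ and $i\neq j$, $E'_{i,j}=\{(u,v)\in E': u\in V(T_i), v\in V(T_j)\}$. *)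

theory Defs
  imports Main
begin

definition graph :: "'a set \<Rightarrow> 'a set set \<Rightarrow> bool" where
  "graph V E \<longleftrightarrow> finite V \<and> (\<forall>e\<in>E. \<exists>u v. u \<noteq> v \<and> u \<in> V \<and> v \<in> V \<and> e = {u, v})"

definition reachable :: "'a set set \<Rightarrow> 'a \<Rightarrow> 'a \<Rightarrow> bool" where
  "reachable E u v \<longleftrightarrow> (\<lambda>x y. {x, y} \<in> E)\<^sup>*\<^sup>* u v"

definition connected_graph :: "'a set \<Rightarrow> 'a set set \<Rightarrow> bool" where
  "connected_graph V E \<longleftrightarrow> (\<forall>u\<in>V. \<forall>v\<in>V. reachable E u v)"

definition induced_cycle :: "'a set \<Rightarrow> 'a set set \<Rightarrow> 'a list \<Rightarrow> bool" where
  "induced_cycle V E cs \<longleftrightarrow> (let n = length cs in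
      distinct cs \<and> set cs \<subseteq> V \<and>
      (\<forall>i<n. {cs ! i, cs ! ((i + 1) mod n)} \<in> E) \<and>
      (\<forall>i<n. \<forall>j<n. i \<noteq> j \<and> j \<noteq> (i + 1) mod n \<and> i \<noteq> (j + 1) mod n
            \<longrightarrow> {cs ! i, cs ! j} \<notin> E))"

definition chordal :: "'a set \<Rightarrow> 'a set set \<Rightarrow> bool" where
  "chordal V E \<longleftrightarrow> \<not> (\<exists>cs. length cs \<ge> 4 \<and> induced_cycle V E cs)"

definition bridges :: "'a set set \<Rightarrow> 'a set set" where
  "bridges E = {e \<in> E. \<exists>u v. e = {u, v} \<and> \<not> reachable (E - {e}) u v}"

text \<open>Vertex sets of the trees of G: the non-trivial connected components of (V, bridges).\<close>
definition tree_vertex_sets :: "'a set \<Rightarrow> 'a set set \<Rightarrow> 'a set set" where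
  "tree_vertex_sets V E =
     {C. \<exists>v\<in>V. C = {u. reachable (bridges E) v u} \<and> card C \<ge> 2}"

definition has_31_cover :: "'a set set \<Rightarrow> bool" where
  "has_31_cover E \<longleftrightarrow> (\<forall>u v. {u, v} \<in> E \<longrightarrow> (\<exists>w. {u, w} \<in> E \<and> {v, w} \<in> E))"

definition non_edges :: "'a set \<Rightarrow> 'a set set \<Rightarrow> 'a set set" where
  "non_edges V E = {{u, v} | u v. u \<in> V \<and> v \<in> V \<and> u \<noteq> v \<and> {u, v} \<notin> E}"

definition completion_31 :: "'a set \<Rightarrow> 'a set set \<Rightarrow> 'a set set \<Rightarrow> bool" where
  "completion_31 V E E' \<longleftrightarrow> E' \<subseteq> non_edges V E \<and> has_31_cover (E \<union> E')"

definition min_completion_31 :: "'a set \<Rightarrow> 'a set set \<Rightarrow> 'a set set \<Rightarrow> bool" where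
  "min_completion_31 V E E' \<longleftrightarrow> completion_31 V E E' \<and>
     (\<forall>F. completion_31 V E F \<longrightarrow> card E' \<le> card F)"

definition between :: "'a set set \<Rightarrow> 'a set \<Rightarrow> 'a set \<Rightarrow> 'a set set" where
  "between E' Ti Tj = {e \<in> E'. \<exists>u v. e = {u, v} \<and> u \<in> Ti \<and> v \<in> Tj}"

end

theory Submission
  imports Defs
begin

text \<open>Let \<open>B = E'\<^sub>i\<^sub>,\<^sub>j\<close> and \<open>P = E' - B\<close>. Every edge of \<open>G\<close> that lies in no triangle
  of \<open>G \<union> P\<close> is, by chordality, a bridge; its triangle in \<open>G \<union> E'\<close> used an edge of \<open>B\<close>, so
  it lies inside \<open>T\<^sub>i\<close> or \<open>T\<^sub>j\<close> and its endpoints are joined by two edges between the trees.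
  These uncovered bridges form a forest on \<open>V(T\<^sub>i) \<union> V(T\<^sub>j)\<close>; the edges of \<open>G \<union> E'\<close>
  between the trees connect everything the forest connects and also join \<open>T\<^sub>i\<close> to \<open>T\<^sub>j\<close>,
  so the forest has fewer edges than there are edges between the trees. At most one of these
  belongs to \<open>G\<close>, hence there are at most \<open>|B|\<close> uncovered bridges. In a tree with at least
  three vertices each bridge is put back into a triangle by one non-edge inside the tree.
  Minimality of \<open>E'\<close> then forces that no edge of \<open>P\<close> lost its triangle either.\<close>

section \<open>Reachability and walks\<close>

lemma reachable_refl [simp]: "reachable X a a"
  by (simp add: reachable_def)

lemma reachable_edge: "{a, b} \<in> X \<Longrightarrow> reachable X a b"
  by (simp add: reachable_def r_into_rtranclp)

lemma reachable_trans: "reachable X a b \<Longrightarrow> reachable X b c \<Longrightarrow> reachable X a c"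
  unfolding reachable_def by (rule rtranclp_trans)

lemma reachable_sym: "reachable X a b \<Longrightarrow> reachable X b a"
  unfolding reachable_def
proof (induction rule: rtranclp_induct)
  case (step y z)
  then have "{z, y} \<in> X" by (simp add: insert_commute)
  then show ?case using step.IH by (rule converse_rtranclp_into_rtranclp)
qed simp

lemma reachable_mono: "reachable X a b \<Longrightarrow> X \<subseteq> Y \<Longrightarrow> reachable Y a b"
  unfolding reachable_def
  by (induction rule: rtranclp_induct) (auto intro: rtranclp.rtrancl_into_rtrancl)

lemma reachable_induct [consumes 1, case_names base step]:
  assumes "reachable X a b" "P a"
    and "\<And>y z. reachable X a y \<Longrightarrow> {y, z} \<in> X \<Longrightarrow> P y \<Longrightarrow> P z"
  shows "P b"
  using assms(1) unfolding reachable_def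
  by (induction rule: rtranclp_induct) (auto intro: assms(2,3) simp: reachable_def)

lemma reachable_closed:
  assumes "reachable X a b" "a \<in> S" "\<And>y z. {y, z} \<in> X \<Longrightarrow> y \<in> S \<Longrightarrow> z \<in> S"
  shows "b \<in> S"
  using assms(1) by (induction rule: reachable_induct) (use assms(2,3) in auto)

lemma reachable_empty: "reachable {} a b \<Longrightarrow> a = b"
  by (induction rule: reachable_induct) auto

lemma reachable_avoid:
  assumes "reachable X a c" "\<And>z. reachable X a z \<Longrightarrow> z \<notin> e"
  shows "reachable (X - {e}) a c"
  using assms(1)
proof (induction rule: reachable_induct)
  case (step y z)
  then have "{y, z} \<in> X - {e}" using assms(2) by auto
  then show ?case using step(3) reachable_trans reachable_edge by metis
qed simp

lemma reachable_insert:
  assumes "reachable (insert {p, q} X) a b"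
  shows "reachable X a b \<or> (reachable X a p \<and> reachable X q b) \<or> (reachable X a q \<and> reachable X p b)"
  using assms
proof (induction rule: reachable_induct)
  case (step y z)
  show ?case
  proof (cases "{y, z} = {p, q}")
    case True
    then have "(y = p \<and> z = q) \<or> (y = q \<and> z = p)" by (auto simp: doubleton_eq_iff)
    then show ?thesis using step(3) by (meson reachable_refl reachable_trans)
  next
    case False
    then have "{y, z} \<in> X" using step(2) by auto
    then show ?thesis using step(3) by (meson reachable_edge reachable_trans)
  qed
qed simp

lemma walk_segment_relpowp:
  assumes "\<And>k. i \<le> k \<Longrightarrow> k < j \<Longrightarrow> R (f k) (f (Suc k))" "i \<le> j"
  shows "(R ^^ (j - i)) (f i) (f j)"
proof -
  have "\<exists>g. g 0 = f i \<and> g (j - i) = f j \<and> (\<forall>k<j - i. R (g k) (g (Suc k)))"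
    by (rule exI[of _ "\<lambda>k. f (i + k)"]) (use assms in auto)
  then show ?thesis by (simp add: relpowp_fun_conv)
qed

lemma shortest_walk:
  assumes "R\<^sup>*\<^sup>* x y"
  obtains n f where "f 0 = x" "f n = y" "\<forall>i<n. R (f i) (f (Suc i))"
    and "\<And>i j. i < j \<Longrightarrow> j \<le> n \<Longrightarrow> f i \<noteq> f j"
    and "\<And>i j. Suc i < j \<Longrightarrow> j \<le> n \<Longrightarrow> \<not> R (f i) (f j)"
proof -
  define n where "n = (LEAST n. (R ^^ n) x y)"
  have "\<exists>n. (R ^^ n) x y" using assms by (simp add: rtranclp_power)
  then have "(R ^^ n) x y" unfolding n_def by (rule LeastI_ex)
  then obtain f where f: "f 0 = x" "f n = y" "\<forall>i<n. R (f i) (f (Suc i))"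
    by (auto simp: relpowp_fun_conv)
  have minimal: "\<not> (R ^^ m) x y" if "m < n" for m
    using not_less_Least[of m "\<lambda>n. (R ^^ n) x y"] that unfolding n_def by blast
  have shortcut: "(R ^^ (i + k + (n - j))) x y" if "(R ^^ k) (f i) (f j)" "i \<le> j" "j \<le> n" for i j k
  proof -
    have "(R ^^ i) x (f i)" using walk_segment_relpowp[of 0 i R f] f that by simp
    moreover have "(R ^^ (n - j)) (f j) y" using walk_segment_relpowp[of j n R f] f that by simp
    ultimately show ?thesis using that(1) by (auto simp: relpowp_add)
  qed
  show thesis
  proof (rule that[OF f])
    show "f i \<noteq> f j" if ij: "i < j" "j \<le> n" for i j
    proof
      assume "f i = f j"
      then have "(R ^^ (i + 0 + (n - j))) x y" by (intro shortcut) (use ij in auto)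
      then show False using minimal ij by simp
    qed
    show "\<not> R (f i) (f j)" if ij: "Suc i < j" "j \<le> n" for i j
    proof
      assume "R (f i) (f j)"
      then have "(R ^^ (i + 1 + (n - j))) x y" by (intro shortcut) (use ij in auto)
      moreover have "i + 1 + (n - j) < n" using ij by simp
      ultimately show False using minimal by blast
    qed
  qed
qed

section \<open>Counting components\<close>

text \<open>Components of \<open>X\<close> traced on \<open>U\<close>; when the edges of \<open>X\<close> lie in \<open>U\<close> these are the
  connected components of the graph \<open>(U, X)\<close>.\<close>

definition component :: "'a set set \<Rightarrow> 'a set \<Rightarrow> 'a \<Rightarrow> 'a set" where
  "component X U z = {y \<in> U. reachable X z y}"

definition num_components :: "'a set set \<Rightarrow> 'a set \<Rightarrow> nat" where
  "num_components X U = card (component X U ` U)"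

lemma component_self: "z \<in> U \<Longrightarrow> z \<in> component X U z"
  by (simp add: component_def)

lemma component_eq_iff: "z' \<in> U \<Longrightarrow> component X U z = component X U z' \<longleftrightarrow> reachable X z z'"
  unfolding component_def by (auto intro: reachable_trans reachable_sym)

lemma num_components_empty: "num_components {} U = card U"
proof -
  have "component {} U ` U = (\<lambda>z. {z}) ` U"
    by (rule image_cong) (auto simp: component_def dest: reachable_empty)
  then show ?thesis by (simp add: num_components_def card_image)
qed

lemma Union_component_coarsening:
  assumes "\<And>a b. reachable D a b \<Longrightarrow> reachable K a b" "z \<in> U"
  shows "\<Union> (component K U ` component D U z) = component K U z"
proof
  show "\<Union> (component K U ` component D U z) \<subseteq> component K U z"
    using assms(1) unfolding component_def by (auto intro: reachable_trans)
  show "component K U z \<subseteq> \<Union> (component K U ` component D U z)"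
    using component_self[OF assms(2)] by blast
qed

lemma component_coarsening:
  assumes "\<And>a b. reachable D a b \<Longrightarrow> reachable K a b"
  shows "component K U ` U = (\<lambda>C. \<Union> (component K U ` C)) ` component D U ` U"
  using Union_component_coarsening[OF assms] by (simp add: image_image)

lemma num_components_less:
  assumes "finite U" "\<And>a b. reachable D a b \<Longrightarrow> reachable K a b"
    and "u \<in> U" "v \<in> U" "reachable K u v" "\<not> reachable D u v"
  shows "num_components K U < num_components D U"
proof -
  let ?m = "\<lambda>C. \<Union> (component K U ` C)"
  let ?S = "component D U ` U"
  have m: "?m (component D U z) = component K U z" if "z \<in> U" for z
    using assms(2) that by (rule Union_component_coarsening)
  have "\<not> inj_on ?m ?S"
  proof
    assume "inj_on ?m ?S"
    moreover have "?m (component D U u) = ?m (component D U v)"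
      using m[OF assms(3)] m[OF assms(4)] component_eq_iff[OF assms(4)] assms(5) by simp
    ultimately have "component D U u = component D U v"
      using assms(3,4) by (auto dest: inj_onD)
    then show False using component_eq_iff[OF assms(4)] assms(6) by blast
  qed
  then have "card (?m ` ?S) \<noteq> card ?S" using assms(1) inj_on_iff_eq_card by blast
  moreover have "card (?m ` ?S) \<le> card ?S" using assms(1) by (simp add: card_image_le)
  moreover have "component K U ` U = ?m ` ?S"
    using assms(2) by (rule component_coarsening)
  ultimately show ?thesis unfolding num_components_def by simp
qed

lemma num_components_insert:
  assumes "finite U" "p \<in> U" "q \<in> U"
  shows "num_components X U \<le> num_components (insert {p, q} X) U + 1"
proof -
  let ?K = "insert {p, q} X"
  let ?m = "\<lambda>C. \<Union> (component ?K U ` C)"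
  let ?S = "component X U ` U"
  let ?Cp = "component X U p"
  have coarser: "reachable X a b \<Longrightarrow> reachable ?K a b" for a b
    by (erule reachable_mono) auto
  have "inj_on ?m (?S - {?Cp})"
  proof (rule inj_onI)
    fix C1 C2 assume C: "C1 \<in> ?S - {?Cp}" "C2 \<in> ?S - {?Cp}" "?m C1 = ?m C2"
    then obtain z1 z2 where z: "z1 \<in> U" "C1 = component X U z1" "z2 \<in> U" "C2 = component X U z2"
      by blast
    have "component ?K U z1 = component ?K U z2"
      using C(3) z Union_component_coarsening[OF coarser] by simp
    then have "reachable ?K z1 z2" using component_eq_iff[OF z(3)] by blast
    with reachable_insert[of p q X z1 z2] consider "reachable X z1 z2" | "reachable X z1 p" | "reachable X p z2"
      by blast
    then show "C1 = C2"
    proof cases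
      case 1
      then show ?thesis using z component_eq_iff by metis
    next
      case 2
      then have "C1 = ?Cp" using z assms(2) component_eq_iff by metis
      then show ?thesis using C(1) by blast
    next
      case 3
      then have "C2 = ?Cp" using z assms(2) component_eq_iff reachable_sym by metis
      then show ?thesis using C(2) by blast
    qed
  qed
  have "num_components X U \<le> card (?S - {?Cp}) + 1"
    unfolding num_components_def using assms(1,2) card_Suc_Diff1[of ?S ?Cp] by simp
  also have "card (?S - {?Cp}) = card (?m ` (?S - {?Cp}))"
    using \<open>inj_on ?m (?S - {?Cp})\<close> by (simp add: card_image)
  also have "\<dots> \<le> card (?m ` ?S)"
    using assms(1) by (intro card_mono) auto
  also have "?m ` ?S = component ?K U ` U"
    using component_coarsening[OF coarser] by simp
  finally show ?thesis unfolding num_components_def by simp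
qed

lemma card_le_num_components_add_card:
  assumes "finite U" "finite X" "\<forall>e\<in>X. \<exists>p q. e = {p, q} \<and> p \<in> U \<and> q \<in> U"
  shows "card U \<le> num_components X U + card X"
  using assms(2,3)
proof (induction X rule: finite_induct)
  case empty
  then show ?case by (simp add: num_components_empty)
next
  case (insert e X)
  then obtain p q where "e = {p, q}" "p \<in> U" "q \<in> U" by blast
  then have "num_components X U \<le> num_components (insert e X) U + 1"
    using num_components_insert[OF assms(1)] by simp
  then show ?case using insert.IH insert.prems insert.hyps by simp
qed

lemma num_components_add_card_forest:
  assumes "finite U" "finite X"
    and "\<forall>e\<in>X. \<exists>p q. e = {p, q} \<and> p \<in> U \<and> q \<in> U \<and> \<not> reachable (X - {e}) p q"
  shows "num_components X U + card X \<le> card U"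
proof -
  have "num_components Y U + card Y \<le> card U" if "finite Y" "Y \<subseteq> X" for Y
    using that
  proof (induction Y rule: finite_induct)
    case empty
    then show ?case by (simp add: num_components_empty)
  next
    case (insert e Y)
    have "e \<in> X" using insert.prems by simp
    then obtain p q where e: "e = {p, q}" "p \<in> U" "q \<in> U" "\<not> reachable (X - {e}) p q"
      using assms(3) by blast
    have "Y \<subseteq> X - {e}" using insert.prems insert.hyps(2) by blast
    then have "\<not> reachable Y p q" using e(4) reachable_mono[of Y p q] by blast
    moreover have "reachable (insert e Y) p q" using e(1) by (simp add: reachable_edge)
    moreover have "reachable Y a b \<Longrightarrow> reachable (insert e Y) a b" for a b
      by (erule reachable_mono) auto
    ultimately have "num_components (insert e Y) U < num_components Y U"
      by (intro num_components_less[OF assms(1) _ e(2,3)])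
    then show ?case using insert.IH insert.prems insert.hyps by simp
  qed
  then show ?thesis using assms(2) by blast
qed

lemma card_forest_less:
  assumes "finite U"
    and forest: "\<forall>e\<in>D. \<exists>p q. e = {p, q} \<and> p \<in> U \<and> q \<in> U \<and> \<not> reachable (D - {e}) p q"
    and K_in_U: "\<forall>e\<in>K. \<exists>p q. e = {p, q} \<and> p \<in> U \<and> q \<in> U"
    and coarser: "\<And>a b. reachable D a b \<Longrightarrow> reachable K a b"
    and "u \<in> U" "v \<in> U" "reachable K u v" "\<not> reachable D u v"
  shows "card D < card K"
proof -
  have "D \<subseteq> Pow U" "K \<subseteq> Pow U" using forest K_in_U by auto
  then have "finite D" "finite K" using assms(1) by (simp_all add: finite_subset)
  have "num_components D U + card D \<le> card U"
    using num_components_add_card_forest[OF assms(1) \<open>finite D\<close> forest] .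
  moreover have "card U \<le> num_components K U + card K"
    using card_le_num_components_add_card[OF assms(1) \<open>finite K\<close> K_in_U] .
  moreover have "num_components K U < num_components D U"
    using num_components_less[OF assms(1) coarser assms(5-8)] .
  ultimately show ?thesis by linarith
qed

section \<open>Bridges and trees\<close>

lemma graph_edgeD: "graph V E \<Longrightarrow> {a, b} \<in> E \<Longrightarrow> a \<in> V \<and> b \<in> V \<and> a \<noteq> b"
  unfolding graph_def by (metis doubleton_eq_iff)

lemma graph_finite_edges:
  assumes "graph V E"
  shows "finite E"
proof -
  have "E \<subseteq> Pow V" using assms unfolding graph_def by auto
  then show ?thesis using assms unfolding graph_def by (simp add: finite_subset)
qed

lemma finite_non_edges:
  assumes "finite V"
  shows "finite (non_edges V E)"
proof -
  have "non_edges V E \<subseteq> Pow V" unfolding non_edges_def by auto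
  then show ?thesis using assms by (simp add: finite_subset)
qed

lemma bridge_not_reachable: "{a, b} \<in> bridges E \<Longrightarrow> \<not> reachable (E - {{a, b}}) a b"
  unfolding bridges_def by (auto simp: doubleton_eq_iff dest: reachable_sym)

lemma bridges_subset: "bridges E \<subseteq> E"
  unfolding bridges_def by blast

lemma bridge_not_in_triangle:
  assumes "{p, q} \<in> bridges E" "w \<notin> {p, q}" "{p, w} \<in> E"
  shows "{q, w} \<notin> E"
proof
  assume "{q, w} \<in> E"
  with assms have "{p, w} \<in> E - {{p, q}}" "{w, q} \<in> E - {{p, q}}"
    by (auto simp: doubleton_eq_iff insert_commute)
  then have "reachable (E - {{p, q}}) p q" by (meson reachable_edge reachable_trans)
  with bridge_not_reachable[OF assms(1)] show False ..
qed

lemma tree_vertex_set_eq: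
  assumes "T \<in> tree_vertex_sets V E" "z \<in> T"
  shows "T = {u. reachable (bridges E) z u}"
  using assms unfolding tree_vertex_sets_def by (auto intro: reachable_trans reachable_sym)

lemma tree_vertex_sets_disjoint:
  assumes "T1 \<in> tree_vertex_sets V E" "T2 \<in> tree_vertex_sets V E" "T1 \<noteq> T2"
  shows "T1 \<inter> T2 = {}"
proof (rule ccontr)
  assume "T1 \<inter> T2 \<noteq> {}"
  then obtain z where "z \<in> T1" "z \<in> T2" by blast
  then show False using assms tree_vertex_set_eq[of T1 V E z] tree_vertex_set_eq[of T2 V E z] by simp
qed

lemma tree_vertex_set_subset:
  assumes "graph V E" "T \<in> tree_vertex_sets V E"
  shows "T \<subseteq> V"
proof
  fix u assume "u \<in> T"
  obtain v where "v \<in> V" "T = {u. reachable (bridges E) v u}"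
    using assms(2) unfolding tree_vertex_sets_def by blast
  moreover have "z \<in> V" if "{y, z} \<in> bridges E" for y z
    using that graph_edgeD[OF assms(1)] bridges_subset by blast
  ultimately show "u \<in> V" using \<open>u \<in> T\<close> reachable_closed[of "bridges E" v u V] by blast
qed

lemma tree_vertex_set_bridge:
  assumes "T \<in> tree_vertex_sets V E" "a \<in> T" "{a, b} \<in> bridges E"
  shows "b \<in> T"
  using tree_vertex_set_eq[OF assms(1,2)] reachable_edge[OF assms(3)] by blast

lemma bridges_forest:
  assumes "D \<subseteq> bridges E" "\<And>e. e \<in> D \<Longrightarrow> e \<subseteq> U"
  shows "\<forall>e\<in>D. \<exists>p q. e = {p, q} \<and> p \<in> U \<and> q \<in> U \<and> \<not> reachable (D - {e}) p q"
proof
  fix e assume "e \<in> D"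
  then obtain p q where pq: "e = {p, q}" using assms(1) unfolding bridges_def by blast
  have "\<not> reachable (E - {e}) p q"
    using bridge_not_reachable[of p q E] assms(1) \<open>e \<in> D\<close> pq by auto
  moreover have "D - {e} \<subseteq> E - {e}" using assms(1) bridges_subset by blast
  ultimately have "\<not> reachable (D - {e}) p q" using reachable_mono[of "D - {e}" p q] by blast
  then show "\<exists>p q. e = {p, q} \<and> p \<in> U \<and> q \<in> U \<and> \<not> reachable (D - {e}) p q"
    using pq assms(2)[OF \<open>e \<in> D\<close>] by blast
qed

lemma betweenI: "{u, v} \<in> X \<Longrightarrow> u \<in> S \<Longrightarrow> v \<in> T \<Longrightarrow> {u, v} \<in> between X S T"
  unfolding between_def by blast

lemma between_commute: "between X S T = between X T S"
  unfolding between_def by (auto simp: insert_commute)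

lemma between_Un: "between (X \<union> Y) S T = between X S T \<union> between Y S T"
  unfolding between_def by blast

lemma between_exchange_empty:
  assumes "S \<inter> T = {}" "\<forall>f\<in>F. f \<subseteq> S \<or> f \<subseteq> T"
  shows "between ((X - between X S T) \<union> F) S T = {}"
proof -
  have "e \<notin> between F S T" for e
  proof
    assume "e \<in> between F S T"
    then obtain u v where "e \<in> F" "e = {u, v}" "u \<in> S" "v \<in> T" unfolding between_def by blast
    then have "{u, v} \<subseteq> S \<or> {u, v} \<subseteq> T" using assms(2) by blast
    then show False using assms(1) \<open>u \<in> S\<close> \<open>v \<in> T\<close> by blast
  qed
  moreover have "between (X - between X S T) S T = {}"
    unfolding between_def by auto
  ultimately show ?thesis unfolding between_Un by auto
qed

text \<open>Two edges of \<open>G\<close> from \<open>T1\<close> to \<open>T2\<close> that start at different vertices would close a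
  cycle through the first bridge of the tree path joining those vertices.\<close>

lemma edges_between_trees_same_end:
  assumes T1: "T1 \<in> tree_vertex_sets V E" and T2: "T2 \<in> tree_vertex_sets V E" and "T1 \<noteq> T2"
    and "x \<in> T1" "x' \<in> T1" "y \<in> T2" "y' \<in> T2" "{x, y} \<in> E" "{x', y'} \<in> E"
  shows "x = x'"
proof (rule ccontr)
  assume "x \<noteq> x'"
  have disjoint: "T1 \<inter> T2 = {}" by (rule tree_vertex_sets_disjoint[OF T1 T2 \<open>T1 \<noteq> T2\<close>])
  let ?R = "\<lambda>a b. {a, b} \<in> bridges E"
  have "?R\<^sup>*\<^sup>* x x'"
    using tree_vertex_set_eq[OF T1 \<open>x \<in> T1\<close>] \<open>x' \<in> T1\<close> unfolding reachable_def by blast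
  then obtain n f where f: "f 0 = x" "f n = x'" "\<forall>i<n. ?R (f i) (f (Suc i))"
    and distinct: "\<And>i j. i < j \<Longrightarrow> j \<le> n \<Longrightarrow> f i \<noteq> f j"
    by (rule shortest_walk) blast
  have "n \<noteq> 0" using f \<open>x \<noteq> x'\<close> by (cases n) auto
  let ?b = "{x, f 1}"
  have b: "?b \<in> bridges E" using f \<open>n \<noteq> 0\<close> by auto
  have "f 1 \<in> T1" by (rule tree_vertex_set_bridge[OF T1 \<open>x \<in> T1\<close> b])
  let ?R' = "\<lambda>a b. {a, b} \<in> E - {?b}"
  have "(?R' ^^ (n - 1)) (f 1) (f n)"
  proof (rule walk_segment_relpowp)
    fix k assume "1 \<le> k" "k < n"
    then have "x \<notin> {f k, f (Suc k)}" using distinct[of 0 k] distinct[of 0 "Suc k"] f(1) by auto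
    then show "?R' (f k) (f (Suc k))" using f(3) \<open>k < n\<close> bridges_subset by blast
  qed (use \<open>n \<noteq> 0\<close> in simp)
  then have x'_f1: "reachable (E - {?b}) x' (f 1)"
    using f(2) relpowp_imp_rtranclp reachable_sym unfolding reachable_def by metis
  have not_in_b: "z \<notin> ?b" if "z \<in> T2" for z
    using that disjoint \<open>x \<in> T1\<close> \<open>f 1 \<in> T1\<close> by blast
  have "reachable (bridges E) y y'"
    using tree_vertex_set_eq[OF T2 \<open>y \<in> T2\<close>] \<open>y' \<in> T2\<close> by blast
  then have "reachable (bridges E - {?b}) y y'"
    by (rule reachable_avoid) (use tree_vertex_set_eq[OF T2 \<open>y \<in> T2\<close>] not_in_b in blast)
  then have y_y': "reachable (E - {?b}) y y'"
    by (rule reachable_mono) (use bridges_subset in blast)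
  have "{x, y} \<in> E - {?b}" "{y', x'} \<in> E - {?b}"
    using assms(8,9) not_in_b[OF \<open>y \<in> T2\<close>] not_in_b[OF \<open>y' \<in> T2\<close>] by (auto simp: insert_commute)
  then have "reachable (E - {?b}) x (f 1)"
    using y_y' x'_f1 by (meson reachable_edge reachable_trans)
  then show False using bridge_not_reachable[OF b] by simp
qed

lemma card_between_trees_le_1:
  assumes T1: "T1 \<in> tree_vertex_sets V E" and T2: "T2 \<in> tree_vertex_sets V E" and "T1 \<noteq> T2"
  shows "card (between E T1 T2) \<le> 1"
proof -
  have unique: "e' = e" if e: "e \<in> between E T1 T2" "e' \<in> between E T1 T2" for e e'
  proof -
    obtain x y x' y' where xy: "e = {x, y}" "e' = {x', y'}"
      and ends: "x \<in> T1" "x' \<in> T1" "y \<in> T2" "y' \<in> T2"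
      and edges: "{x, y} \<in> E" "{x', y'} \<in> E"
      using e unfolding between_def by blast
    have "x = x'" by (rule edges_between_trees_same_end[OF T1 T2 assms(3) ends edges])
    moreover have "y = y'"
      by (rule edges_between_trees_same_end[OF T2 T1 _ ends(3,4,1,2)])
        (use assms(3) edges in \<open>auto simp: insert_commute\<close>)
    ultimately show ?thesis using xy by simp
  qed
  show ?thesis
  proof (cases "between E T1 T2 = {}")
    case False
    then obtain e where "e \<in> between E T1 T2" by blast
    then have "between E T1 T2 = {e}" using unique by blast
    then show ?thesis by simp
  qed simp
qed

lemma card_between_Un_le:
  assumes "T1 \<in> tree_vertex_sets V E" "T2 \<in> tree_vertex_sets V E" "T1 \<noteq> T2"
  shows "card (between (E \<union> E') T1 T2) \<le> card (between E' T1 T2) + 1"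
proof -
  have "card (between (E \<union> E') T1 T2) \<le> card (between E' T1 T2) + card (between E T1 T2)"
    unfolding between_Un by (simp add: card_Un_le add.commute)
  then show ?thesis using card_between_trees_le_1[OF assms] by linarith
qed

section \<open>Triangles and completions\<close>

definition in_triangle :: "'a set set \<Rightarrow> 'a set \<Rightarrow> bool" where
  "in_triangle H e \<longleftrightarrow> (\<exists>u v w. e = {u, v} \<and> {u, w} \<in> H \<and> {v, w} \<in> H)"

lemma in_triangle_mono: "in_triangle H e \<Longrightarrow> H \<subseteq> H' \<Longrightarrow> in_triangle H' e"
  unfolding in_triangle_def by blast

lemma has_31_coverI:
  assumes "\<And>e. e \<in> H \<Longrightarrow> in_triangle H e"
  shows "has_31_cover H"
  unfolding has_31_cover_def
proof (intro allI impI)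
  fix u v assume "{u, v} \<in> H"
  then obtain u' v' w where "{u, v} = {u', v'}" "{u', w} \<in> H" "{v', w} \<in> H"
    using assms unfolding in_triangle_def by blast
  then show "\<exists>w. {u, w} \<in> H \<and> {v, w} \<in> H" by (auto simp: doubleton_eq_iff)
qed

lemma bridge_triangle_completion:
  assumes G: "graph V E" and T: "T \<in> tree_vertex_sets V E" "card T \<ge> 3"
    and d: "d \<in> bridges E" "d \<subseteq> T"
  shows "\<exists>f\<in>non_edges V E. f \<subseteq> T \<and> in_triangle (insert f E) d \<and> in_triangle E f"
proof -
  obtain p q where pq: "d = {p, q}" using d(1) unfolding bridges_def by blast
  have "\<not> T \<subseteq> {p, q}"
  proof
    assume "T \<subseteq> {p, q}"
    then have "card T \<le> card {p, q}" by (rule card_mono[rotated]) simp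
    also have "\<dots> \<le> 2" by (simp add: card_insert_if)
    finally show False using T(2) by simp
  qed
  then obtain z where "z \<in> T" "z \<notin> {p, q}" by blast
  have "p \<in> T" using d(2) pq by simp
  then have "reachable (bridges E) p z" using tree_vertex_set_eq[OF T(1)] \<open>z \<in> T\<close> by blast
  have "\<exists>a r. a \<in> {p, q} \<and> r \<notin> {p, q} \<and> {a, r} \<in> bridges E"
  proof (rule ccontr)
    assume "\<nexists>a r. a \<in> {p, q} \<and> r \<notin> {p, q} \<and> {a, r} \<in> bridges E"
    then have "z \<in> {p, q}"
      by (intro reachable_closed[OF \<open>reachable (bridges E) p z\<close>]) auto
    with \<open>z \<notin> {p, q}\<close> show False ..
  qed
  then obtain a r where ar: "a \<in> {p, q}" "r \<notin> {p, q}" "{a, r} \<in> bridges E" by blast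
  have completion: "\<exists>f\<in>non_edges V E. f \<subseteq> T \<and> in_triangle (insert f E) d \<and> in_triangle E f"
    if ab: "d = {a, b}" "r \<notin> {a, b}" "{a, r} \<in> bridges E" for a b
  proof -
    have "a \<in> T" "b \<in> T" using d(2) ab(1) by auto
    have "r \<in> T" using tree_vertex_set_bridge[OF T(1) \<open>a \<in> T\<close> ab(3)] .
    have E: "{a, r} \<in> E" "{r, a} \<in> E" "{b, a} \<in> E"
      using ab d(1) bridges_subset by (auto simp: insert_commute)
    have "{b, r} \<notin> E"
      using bridge_not_in_triangle[of a b E r] d(1) ab bridges_subset by blast
    then have "{b, r} \<in> non_edges V E"
      unfolding non_edges_def using tree_vertex_set_subset[OF G T(1)] \<open>b \<in> T\<close> \<open>r \<in> T\<close> ab(2)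
      by blast
    moreover have "in_triangle (insert {b, r} E) d"
      unfolding in_triangle_def using ab(1) E(1) by (intro exI[of _ a] exI[of _ b] exI[of _ r]) simp
    moreover have "in_triangle E {b, r}"
      unfolding in_triangle_def using E(2,3) by (intro exI[of _ b] exI[of _ r] exI[of _ a]) simp
    ultimately show ?thesis using \<open>b \<in> T\<close> \<open>r \<in> T\<close> by (intro bexI[of _ "{b, r}"]) simp_all
  qed
  show ?thesis
  proof (cases "a = p")
    case True
    then show ?thesis using completion[of p q] pq ar by blast
  next
    case False
    then have "a = q" using ar(1) by blast
    then show ?thesis using completion[of q p] pq ar by (auto simp: insert_commute)
  qed
qed

lemma induced_cycle_shortest_detour:
  assumes closing: "{f 0, f n} \<in> E"
    and walk: "\<forall>i<n. {f i, f (Suc i)} \<in> E"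
    and distinct: "\<And>i j. i < j \<Longrightarrow> j \<le> n \<Longrightarrow> f i \<noteq> f j"
    and chordless: "\<And>i j. Suc i < j \<Longrightarrow> j \<le> n \<Longrightarrow> {f i, f j} \<notin> E - {{f 0, f n}}"
    and in_V: "\<And>i. i \<le> n \<Longrightarrow> f i \<in> V"
  shows "induced_cycle V E (map f [0..<Suc n])"
proof -
  let ?cs = "map f [0..<Suc n]"
  have nth: "?cs ! i = f i" if "i < Suc n" for i
    using that by (simp del: upt_Suc)
  have no_chord: "{f i, f j} \<notin> E" if "i < j" "j \<le> n" "j \<noteq> Suc i" "\<not> (i = 0 \<and> j = n)" for i j
  proof
    assume "{f i, f j} \<in> E"
    moreover have "{f i, f j} \<noteq> {f 0, f n}"
      using that distinct[of 0 j] distinct[of i n] distinct[of 0 i] distinct[of j n]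
      by (auto simp: doubleton_eq_iff)
    ultimately show False using chordless[of i j] that by simp
  qed
  show ?thesis
    unfolding induced_cycle_def Let_def length_map length_upt diff_zero
  proof (intro conjI allI impI)
    show "distinct ?cs"
      unfolding distinct_conv_nth length_map length_upt
      using nth distinct by (metis diff_zero less_Suc_eq_le linorder_neqE_nat)
    show "set ?cs \<subseteq> V" using in_V by auto
  next
    fix i assume i: "i < Suc n"
    show "{?cs ! i, ?cs ! ((i + 1) mod Suc n)} \<in> E"
    proof (cases "i < n")
      case True
      then show ?thesis using walk nth i by simp
    next
      case False
      then have "i = n" using i by simp
      then show ?thesis using closing nth by (simp add: insert_commute)
    qed
  next
    have non_adjacent: "{f a, f b} \<notin> E"
      if "a < b" "b < Suc n" "b \<noteq> (a + 1) mod Suc n" "a \<noteq> (b + 1) mod Suc n" for a b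
    proof (rule no_chord)
      show "b \<noteq> Suc a" using that by auto
      show "\<not> (a = 0 \<and> b = n)" using that by auto
    qed (use that in auto)
    fix i j assume "i < Suc n" "j < Suc n"
      "i \<noteq> j \<and> j \<noteq> (i + 1) mod Suc n \<and> i \<noteq> (j + 1) mod Suc n"
    then show "{?cs ! i, ?cs ! j} \<notin> E"
      using non_adjacent[of i j] non_adjacent[of j i] nth
      by (cases "i < j") (auto simp: insert_commute)
  qed
qed

lemma chordal_non_bridge_in_triangle:
  assumes G: "graph V E" and "chordal V E" and e: "e \<in> E" "e \<notin> bridges E"
  shows "in_triangle E e"
proof -
  obtain x y where xy: "e = {x, y}"
    using G e(1) unfolding graph_def by blast
  let ?R = "\<lambda>a b. {a, b} \<in> E - {e}"
  have "?R\<^sup>*\<^sup>* x y"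
    using e xy unfolding bridges_def reachable_def by blast
  then obtain n f where f: "f 0 = x" "f n = y" "\<forall>i<n. ?R (f i) (f (Suc i))"
    and distinct: "\<And>i j. i < j \<Longrightarrow> j \<le> n \<Longrightarrow> f i \<noteq> f j"
    and chordless: "\<And>i j. Suc i < j \<Longrightarrow> j \<le> n \<Longrightarrow> \<not> ?R (f i) (f j)"
    by (rule shortest_walk) blast
  have "x \<noteq> y" using graph_edgeD[OF G] e(1) xy by blast
  then have "n \<noteq> 0" using f by auto
  moreover have "n \<noteq> 1" using f xy by auto
  ultimately consider "n = 2" | "n \<ge> 3" by linarith
  then show ?thesis
  proof cases
    case 1
    then have "{x, f 1} \<in> E" "{y, f 1} \<in> E" using f by (auto simp: numeral_2_eq_2 insert_commute)
    then show ?thesis unfolding in_triangle_def using xy by blast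
  next
    case 2
    have in_V: "f i \<in> V" if "i \<le> n" for i
    proof (cases "i < n")
      case True
      then show ?thesis using f(3) graph_edgeD[OF G] by blast
    next
      case False
      then show ?thesis using that f(2) graph_edgeD[OF G] e(1) xy by auto
    qed
    have "induced_cycle V E (map f [0..<Suc n])"
      by (rule induced_cycle_shortest_detour) (use f distinct chordless e(1) xy in_V in auto)
    moreover have "length (map f [0..<Suc n]) \<ge> 4" using 2 by simp
    ultimately show ?thesis using assms(2) unfolding chordal_def by blast
  qed
qed

text \<open>The other two sides of a triangle of \<open>H\<close> lie in that triangle as well, so removing the
  edges of \<open>H\<close> that are in no triangle destroys no triangle.\<close>

lemma has_31_cover_covered_Un:
  assumes "\<And>e. e \<in> R \<Longrightarrow> in_triangle ({e \<in> H. in_triangle H e} \<union> R) e"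
  shows "has_31_cover ({e \<in> H. in_triangle H e} \<union> R)"
proof (rule has_31_coverI)
  fix e assume e: "e \<in> {e \<in> H. in_triangle H e} \<union> R"
  show "in_triangle ({e \<in> H. in_triangle H e} \<union> R) e"
  proof (cases "e \<in> R")
    case False
    then obtain u v w where uvw: "e = {u, v}" "{u, w} \<in> H" "{v, w} \<in> H"
      using e unfolding in_triangle_def by blast
    have "{u, v} \<in> H" using e False uvw(1) by blast
    then have "in_triangle H {u, w}" "in_triangle H {v, w}"
      using uvw(2,3) unfolding in_triangle_def by (metis insert_commute)+
    then show ?thesis using uvw unfolding in_triangle_def by blast
  qed (rule assms)
qed

lemma uncovered_edge_in_tree:
  assumes G: "graph V E" and ch: "chordal V E" and cover: "has_31_cover (E \<union> E')"
    and Ti: "Ti \<in> tree_vertex_sets V E" and Tj: "Tj \<in> tree_vertex_sets V E"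
    and d: "d \<in> E" "\<not> in_triangle (E \<union> (E' - between E' Ti Tj)) d"
  shows "d \<in> bridges E \<and> (d \<subseteq> Ti \<or> d \<subseteq> Tj) \<and>
    (\<exists>a b w. d = {a, b} \<and> {a, w} \<in> between (E \<union> E') Ti Tj \<and> {b, w} \<in> between (E \<union> E') Ti Tj)"
proof -
  let ?B = "between E' Ti Tj"
  have bridge: "d \<in> bridges E"
    using chordal_non_bridge_in_triangle[OF G ch d(1)] in_triangle_mono d(2) by blast
  have "\<exists>a b w. d = {a, b} \<and> {a, w} \<in> ?B \<and> {b, w} \<in> E \<union> E'"
  proof -
    obtain a b where ab: "d = {a, b}" using bridge unfolding bridges_def by blast
    then obtain w where w: "{a, w} \<in> E \<union> E'" "{b, w} \<in> E \<union> E'"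
      using cover d(1) unfolding has_31_cover_def by blast
    have "\<not> ({a, w} \<in> E \<union> (E' - ?B) \<and> {b, w} \<in> E \<union> (E' - ?B))"
      using d(2) ab unfolding in_triangle_def by blast
    then consider "{a, w} \<in> ?B" | "{b, w} \<in> ?B" using w by blast
    then show ?thesis
    proof cases
      case 1
      then show ?thesis using ab w(2) by blast
    next
      case 2
      moreover have "d = {b, a}" using ab by (simp add: insert_commute)
      ultimately show ?thesis using w(1) by blast
    qed
  qed
  then obtain a b w where abw: "d = {a, b}" "{a, w} \<in> ?B" "{b, w} \<in> E \<union> E'"
    by blast
  have "{a, b} \<in> bridges E" "{b, a} \<in> bridges E"
    using bridge abw(1) by (simp_all add: insert_commute)
  then have same_tree: "b \<in> Ti \<longleftrightarrow> a \<in> Ti" "b \<in> Tj \<longleftrightarrow> a \<in> Tj"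
    using tree_vertex_set_bridge[OF Ti] tree_vertex_set_bridge[OF Tj] by blast+
  have aw: "{a, w} \<in> between (E \<union> E') Ti Tj" using abw(2) by (simp add: between_Un)
  have "(a \<in> Ti \<and> w \<in> Tj) \<or> (a \<in> Tj \<and> w \<in> Ti)"
    using abw(2) unfolding between_def by (auto simp: doubleton_eq_iff)
  then show ?thesis
  proof
    assume aw': "a \<in> Ti \<and> w \<in> Tj"
    then have "b \<in> Ti" using same_tree by blast
    then have "d \<subseteq> Ti" "{b, w} \<in> between (E \<union> E') Ti Tj"
      using aw' abw(1) betweenI[OF abw(3)] by auto
    then show ?thesis using bridge abw(1) aw by blast
  next
    assume aw': "a \<in> Tj \<and> w \<in> Ti"
    then have "b \<in> Tj" using same_tree by blast
    then have "d \<subseteq> Tj" "{b, w} \<in> between (E \<union> E') Tj Ti"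
      using aw' abw(1) betweenI[OF abw(3)] by auto
    then show ?thesis using bridge abw(1) aw between_commute by blast
  qed
qed

lemma card_uncovered_le_card_between:
  assumes G: "graph V E" and ch: "chordal V E" and cover: "has_31_cover (E \<union> E')"
    and Ti: "Ti \<in> tree_vertex_sets V E" and Tj: "Tj \<in> tree_vertex_sets V E" and "Ti \<noteq> Tj"
    and "between E' Ti Tj \<noteq> {}"
  shows "card {d \<in> E. \<not> in_triangle (E \<union> (E' - between E' Ti Tj)) d} \<le> card (between E' Ti Tj)"
proof -
  define D where "D = {d \<in> E. \<not> in_triangle (E \<union> (E' - between E' Ti Tj)) d}"
  define K where "K = between (E \<union> E') Ti Tj"
  let ?U = "Ti \<union> Tj"
  have D_bridge: "d \<in> bridges E" and D_tree: "d \<subseteq> Ti \<or> d \<subseteq> Tj"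
    and D_K: "\<exists>a b w. d = {a, b} \<and> {a, w} \<in> K \<and> {b, w} \<in> K" if "d \<in> D" for d
    using uncovered_edge_in_tree[OF G ch cover Ti Tj, of d] that unfolding D_def K_def by simp_all
  have disjoint: "Ti \<inter> Tj = {}" by (rule tree_vertex_sets_disjoint[OF Ti Tj \<open>Ti \<noteq> Tj\<close>])
  have "?U \<subseteq> V" using tree_vertex_set_subset[OF G] Ti Tj by blast
  then have "finite ?U" using G finite_subset unfolding graph_def by blast
  have forest: "\<forall>e\<in>D. \<exists>p q. e = {p, q} \<and> p \<in> ?U \<and> q \<in> ?U \<and> \<not> reachable (D - {e}) p q"
    by (rule bridges_forest[of D E]) (use D_bridge D_tree in blast)+
  have K_in_U: "\<forall>e\<in>K. \<exists>p q. e = {p, q} \<and> p \<in> ?U \<and> q \<in> ?U"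
    unfolding K_def between_def by blast
  have coarser: "reachable K a b" if "reachable D a b" for a b
    using that
  proof (induction rule: reachable_induct)
    case (step y z)
    then obtain a b w where abw: "{y, z} = {a, b}" "{a, w} \<in> K" "{b, w} \<in> K"
      using D_K by blast
    have "{w, b} \<in> K" using abw(3) by (simp add: insert_commute)
    then have "reachable K a b" by (rule reachable_trans[OF reachable_edge[OF abw(2)] reachable_edge])
    then have "reachable K y z" using abw(1) reachable_sym by (auto simp: doubleton_eq_iff)
    with step(3) show ?case by (rule reachable_trans)
  qed simp
  obtain u v where uv: "{u, v} \<in> between E' Ti Tj" "u \<in> Ti" "v \<in> Tj"
    using \<open>between E' Ti Tj \<noteq> {}\<close> unfolding between_def by blast
  have "reachable K u v" using uv(1) unfolding K_def by (simp add: between_Un reachable_edge)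
  moreover have "\<not> reachable D u v"
  proof
    assume "reachable D u v"
    moreover have "z \<in> Ti" if "{y, z} \<in> D" "y \<in> Ti" for y z
      using D_tree[OF that(1)] that(2) disjoint by blast
    ultimately have "v \<in> Ti" using uv(2) reachable_closed[of D u v Ti] by blast
    then show False using uv(3) disjoint by blast
  qed
  ultimately have "card D < card K"
    using card_forest_less[OF \<open>finite ?U\<close> forest K_in_U coarser, where u = u and v = v] uv(2,3)
    by simp
  moreover have "card K \<le> card (between E' Ti Tj) + 1"
    unfolding K_def by (rule card_between_Un_le[OF Ti Tj \<open>Ti \<noteq> Tj\<close>])
  ultimately have "card D \<le> card (between E' Ti Tj)" by linarith
  then show ?thesis unfolding D_def .
qed

lemma bridge_set_triangle_completion:
  assumes G: "graph V E"
    and trees: "\<And>T. T \<in> \<T> \<Longrightarrow> T \<in> tree_vertex_sets V E \<and> card T \<ge> 3"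
    and D: "\<And>d. d \<in> D \<Longrightarrow> d \<in> bridges E \<and> (\<exists>T\<in>\<T>. d \<subseteq> T)"
  obtains F where "F \<subseteq> non_edges V E" "\<forall>f\<in>F. \<exists>T\<in>\<T>. f \<subseteq> T" "card F \<le> card D"
    "\<forall>e\<in>D \<union> F. in_triangle (E \<union> F) e"
proof -
  have "\<forall>d\<in>D. \<exists>f. f \<in> non_edges V E \<and> (\<exists>T\<in>\<T>. f \<subseteq> T) \<and>
      in_triangle (insert f E) d \<and> in_triangle E f"
  proof
    fix d assume "d \<in> D"
    then obtain T where T: "T \<in> \<T>" and d: "d \<in> bridges E" "d \<subseteq> T" using D by blast
    with trees have "T \<in> tree_vertex_sets V E" "card T \<ge> 3" by auto
    then have "\<exists>f\<in>non_edges V E. f \<subseteq> T \<and> in_triangle (insert f E) d \<and> in_triangle E f"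
      using bridge_triangle_completion[OF G _ _ d] by blast
    with T show "\<exists>f. f \<in> non_edges V E \<and> (\<exists>T\<in>\<T>. f \<subseteq> T) \<and>
        in_triangle (insert f E) d \<and> in_triangle E f"
      by blast
  qed
  then obtain g where g: "\<forall>d\<in>D. g d \<in> non_edges V E \<and> (\<exists>T\<in>\<T>. g d \<subseteq> T) \<and>
      in_triangle (insert (g d) E) d \<and> in_triangle E (g d)"
    by (rule bchoice[THEN exE])
  have "finite D"
    using D bridges_subset graph_finite_edges[OF G] finite_subset[of D E] by blast
  show thesis
  proof (rule that[of "g ` D"])
    show "g ` D \<subseteq> non_edges V E" "\<forall>f\<in>g ` D. \<exists>T\<in>\<T>. f \<subseteq> T" using g by auto
    show "card (g ` D) \<le> card D" using \<open>finite D\<close> by (rule card_image_le)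
    show "\<forall>e\<in>D \<union> g ` D. in_triangle (E \<union> g ` D) e"
    proof
      fix e assume "e \<in> D \<union> g ` D"
      then consider "e \<in> D" | d where "d \<in> D" "e = g d" by blast
      then show "in_triangle (E \<union> g ` D) e"
      proof cases
        case 1
        with g have "in_triangle (insert (g e) E) e" by blast
        then show ?thesis by (rule in_triangle_mono) (use 1 in blast)
      next
        case 2
        with g have "in_triangle E e" by blast
        then show ?thesis by (rule in_triangle_mono) blast
      qed
    qed
  qed
qed

lemma min_completion_31_exchange:
  assumes G: "graph V E" and min: "min_completion_31 V E E'" and "B \<subseteq> E'"
    and F: "F \<subseteq> non_edges V E" "card F \<le> card B"
    and repair: "\<forall>e \<in> {d \<in> E. \<not> in_triangle (E \<union> (E' - B)) d} \<union> F. in_triangle (E \<union> F) e"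
  shows "min_completion_31 V E ((E' - B) \<union> F)"
proof -
  let ?P = "E' - B"
  let ?H = "E \<union> ?P"
  let ?P' = "{e \<in> ?P. in_triangle ?H e}"
  have E'_non_edges: "E' \<subseteq> non_edges V E" and minimal: "\<And>X. completion_31 V E X \<Longrightarrow> card E' \<le> card X"
    using min unfolding min_completion_31_def completion_31_def by auto
  have "finite V" using G unfolding graph_def by simp
  then have "finite E'" using E'_non_edges finite_non_edges finite_subset by blast
  have "E \<union> (?P' \<union> F) = {e \<in> ?H. in_triangle ?H e} \<union> ({d \<in> E. \<not> in_triangle ?H d} \<union> F)"
    by blast
  moreover have "has_31_cover ({e \<in> ?H. in_triangle ?H e} \<union> ({d \<in> E. \<not> in_triangle ?H d} \<union> F))"
  proof (rule has_31_cover_covered_Un)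
    fix e assume "e \<in> {d \<in> E. \<not> in_triangle ?H d} \<union> F"
    then have "in_triangle (E \<union> F) e" using repair by blast
    then show "in_triangle ({e \<in> ?H. in_triangle ?H e} \<union> ({d \<in> E. \<not> in_triangle ?H d} \<union> F)) e"
      by (rule in_triangle_mono) blast
  qed
  ultimately have "completion_31 V E (?P' \<union> F)"
    unfolding completion_31_def using E'_non_edges F(1) by auto
  then have "card E' \<le> card (?P' \<union> F)" by (rule minimal)
  also have "\<dots> \<le> card ?P' + card F" by (rule card_Un_le)
  finally have "card E' \<le> card ?P' + card F" .
  moreover have card_P: "card ?P + card B = card E'"
    using card_Diff_subset[OF finite_subset[OF \<open>B \<subseteq> E'\<close> \<open>finite E'\<close>] \<open>B \<subseteq> E'\<close>]
      card_mono[OF \<open>finite E'\<close> \<open>B \<subseteq> E'\<close>] by linarith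
  ultimately have "card ?P \<le> card ?P'" using F(2) by linarith
  moreover have "?P' \<subseteq> ?P" by blast
  moreover have "finite ?P" using \<open>finite E'\<close> by simp
  ultimately have "?P' = ?P" using card_mono[of ?P ?P'] card_subset_eq[of ?P ?P'] by simp
  then have "completion_31 V E (?P \<union> F)" using \<open>completion_31 V E (?P' \<union> F)\<close> by simp
  moreover have "card (?P \<union> F) \<le> card E'" using card_Un_le[of ?P F] card_P F(2) by linarith
  ultimately show ?thesis unfolding min_completion_31_def using minimal le_trans by blast
qed

theorem lemma12:
  fixes V :: "'a set" and E E' :: "'a set set" and Ti Tj :: "'a set"
  assumes "graph V E" "connected_graph V E" "chordal V E" "card V \<ge> 3"
    and "min_completion_31 V E E'"
    and "Ti \<in> tree_vertex_sets V E" "Tj \<in> tree_vertex_sets V E" "Ti \<noteq> Tj"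
    and "card Ti \<ge> 3" "card Tj \<ge> 3"
    and "card (between E' Ti Tj) > 0"
  shows "\<exists>F E''. F \<subseteq> non_edges V E \<and>
           (\<forall>e\<in>F. e \<subseteq> Ti \<or> e \<subseteq> Tj) \<and>
           E'' = (E' - between E' Ti Tj) \<union> F \<and>
           min_completion_31 V E E'' \<and>
           card (between E'' Ti Tj) = 0"
proof -
  let ?B = "between E' Ti Tj"
  let ?D = "{d \<in> E. \<not> in_triangle (E \<union> (E' - ?B)) d}"
  have cover: "has_31_cover (E \<union> E')"
    using assms(5) unfolding min_completion_31_def completion_31_def by simp
  have "?B \<noteq> {}" using assms(11) by (metis card.empty less_irrefl)
  with card_uncovered_le_card_between[OF assms(1,3) cover assms(6-8)]
  have "card ?D \<le> card ?B" .
  obtain F where F: "F \<subseteq> non_edges V E" "\<forall>f\<in>F. \<exists>T\<in>{Ti, Tj}. f \<subseteq> T" "card F \<le> card ?D"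
    "\<forall>e\<in>?D \<union> F. in_triangle (E \<union> F) e"
  proof (rule bridge_set_triangle_completion[OF assms(1)])
    show "T \<in> tree_vertex_sets V E \<and> card T \<ge> 3" if "T \<in> {Ti, Tj}" for T
      using that assms(6,7,9,10) by blast
    show "d \<in> bridges E \<and> (\<exists>T\<in>{Ti, Tj}. d \<subseteq> T)" if "d \<in> ?D" for d
      using uncovered_edge_in_tree[OF assms(1,3) cover assms(6,7)] that by simp
  qed
  have "?B \<subseteq> E'" unfolding between_def by blast
  with F(1,3,4) \<open>card ?D \<le> card ?B\<close> have "min_completion_31 V E ((E' - ?B) \<union> F)"
    by (intro min_completion_31_exchange[OF assms(1,5)]) simp_all
  moreover have "between ((E' - ?B) \<union> F) Ti Tj = {}"
    using between_exchange_empty tree_vertex_sets_disjoint[OF assms(6-8)] F(2) by simp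
  ultimately show ?thesis using F(1,2) by (intro exI[of _ F] exI[of _ "(E' - ?B) \<union> F"]) simp
qed

end
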